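(* Let $\Omega=\{\omega_1,\dots,\omega_K\}$ be a finite set of scenarios with probabilities $p^{\omega_k}>0$, $\sum_k p^{\omega_k}=1$, and base arrival rates $0<\Lambda_0^{\omega_1}<\Lambda_0^{\omega_2}<\dots<\Lambda_0^{\omega_K}$; for $m\in\mathbb{N}$ set $\Lambda_m^{\omega}=m\Lambda_0^\omega$. Let $\bar c:[0,\infty)\to\mathbb{R}$ be continuous and strictly increasing and, for $m\in\mathbb{N}$, $\beta\ge0$, $\omega\in\Omega$, let $c_m(\beta,\omega)=\bar c\big(\Lambda_m^\omega+\beta\sqrt{\Lambda_m^\omega}\big)$. Let $\epsilon\in(0,1)$ and suppose there is an index $i$ with $\sum_{k=i}^K p^{\omega_k}>\epsilon$ and $\sum_{k=i+1}^K p^{\omega_k}<\epsilon$. Problem $F_m$: minimize $c_m(\beta,\omega^{key})$ over $\beta\ge0$, $\omega^{key}\in\Omega$, subject to $$\sum_{\omega\in\Omega}p^\omega\,\bar\alpha\Big(\Lambda_m^{\omega^{key}}+\beta\sqrt{\Lambda_m^{\omega^{key}}},\ \Lambda_m^\omega\Big)\le\epsilon .$$ Let $\mathbf{W}_m$ be the set of $\omega^{key}$ appearing in some optimal solution $(\beta,\omega^{key})$ of $F_m$. Problem $G_m$: minimize $c_m(\beta,\omega_i)$ over $\beta\ge0$ subject to $p^{\omega_i}\,UB(\beta,\Lambda_m^{\omega_i})\le \epsilon-\sum_{k=i+1}^K p^{\omega_k}$, with optimal solution $\beta^G_m$. Then there exists $\bar m$ such that $\omega_i\in\mathbf{W}_m$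 for all $m\ge\bar m$; and, letting $\beta^F_m$ (for $m\ge\bar m$) denote the optimal $\beta$ of $F_m$ when $\omega^{key}=\omega_i$, there is $\beta^*>0$ with $$\lim_{m\to\infty}\beta^G_m=\lim_{m\to\infty}\beta^F_m=\beta^*.$$
   Context: $\phi,\Phi$ are the standard normal density and distribution function. For $\lambda>0$ and real $n\ge 0$, $\bar\alpha(n,\lambda)=\min\Big\{1,\big[\lambda\int_0^\infty t e^{-\lambda t}(1+t)^{n-1}\,dt\big]^{-1}\Big\}$ is the continuous Erlang-C function (the stationary probability that a customer waits in an $M/M/n$ queue with arrival rate $\lambda$ and service rate 1, extended to real $n$; it equals 1 for $n\le\lambda$). For $\lambda>0,\beta\ge 0$ set $n=\lambda+\beta\sqrt{\lambda}$, $\rho=\lambda/n$, $a=\sqrt{-2n(1-\rho+\ln\rho)}$, $\gamma=(n-\lambda)/\sqrt{n}$, and $UB(\beta,\lambda)=\left[\rho+\gamma\left(\frac{\Phi(a)}{\phi(a)}+\frac{2}{3\sqrt{n}}\right)\right]^{-1}$. It is known (Janssen, van Leeuwaarden and Zwart) that $\bar\alpha(\lambda+\beta\sqrt\lambda,\lambda)\le UB(\beta,\lambda)$ for all $\lambda,\beta>0$. The staffing level chosen by a decision $(\beta,\omega^{key})$ is $\Lambda_m^{\omega^{key}}+\beta\sqrt{\Lambda_m^{\omega^{key}}}$, independent of the realized scenario. *)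

theory Defs
  imports "HOL-Probability.Probability"
begin

definition phi_std :: "real \<Rightarrow> real" where
  "phi_std x = std_normal_density x"

definition Phi_std :: "real \<Rightarrow> real" where
  "Phi_std x = (LBINT t:{..x}. std_normal_density t)"

text \<open>Continuous Erlang-C function alpha_bar(n, lambda) (service rate 1).\<close>
definition erlangC :: "real \<Rightarrow> real \<Rightarrow> real" where
  "erlangC n lam = min 1
     (inverse (lam * (LBINT t:{0..}. t * exp (- lam * t) * (1 + t) powr (n - 1))))"

text \<open>Upper bound UB(beta, lambda) of Janssen, van Leeuwaarden and Zwart.\<close>
definition UB :: "real \<Rightarrow> real \<Rightarrow> real" where
  "UB \<beta> lam =
     (let n = lam + \<beta> * sqrt lam;
          \<rho> = lam / n;
          a = sqrt (- 2 * n * (1 - \<rho> + ln \<rho>));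
          \<gamma> = (n - lam) / sqrt n
      in inverse (\<rho> + \<gamma> * (Phi_std a / phi_std a + 2 / (3 * sqrt n))))"

text \<open>Scenarios are indexed by 1..K; arrival rate of scenario k at scale m is m * Lambda0 k.\<close>
definition Lam :: "(nat \<Rightarrow> real) \<Rightarrow> nat \<Rightarrow> nat \<Rightarrow> real" where
  "Lam \<Lambda>0 m k = real m * \<Lambda>0 k"

definition staff :: "(nat \<Rightarrow> real) \<Rightarrow> nat \<Rightarrow> real \<Rightarrow> nat \<Rightarrow> real" where
  "staff \<Lambda>0 m \<beta> k = Lam \<Lambda>0 m k + \<beta> * sqrt (Lam \<Lambda>0 m k)"

definition cost :: "(real \<Rightarrow> real) \<Rightarrow> (nat \<Rightarrow> real) \<Rightarrow> nat \<Rightarrow> real \<Rightarrow> nat \<Rightarrow> real" where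
  "cost cbar \<Lambda>0 m \<beta> k = cbar (staff \<Lambda>0 m \<beta> k)"

definition feasF :: "nat \<Rightarrow> (nat \<Rightarrow> real) \<Rightarrow> (nat \<Rightarrow> real) \<Rightarrow> real \<Rightarrow> nat \<Rightarrow> real \<Rightarrow> nat \<Rightarrow> bool" where
  "feasF K p \<Lambda>0 \<epsilon> m \<beta> k \<longleftrightarrow> \<beta> \<ge> 0 \<and> k \<in> {1..K} \<and>
     (\<Sum>j=1..K. p j * erlangC (staff \<Lambda>0 m \<beta> k) (Lam \<Lambda>0 m j)) \<le> \<epsilon>"

definition optF :: "nat \<Rightarrow> (nat \<Rightarrow> real) \<Rightarrow> (nat \<Rightarrow> real) \<Rightarrow> (real \<Rightarrow> real) \<Rightarrow> real \<Rightarrow> nat \<Rightarrow> real \<Rightarrow> nat \<Rightarrow> bool" where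
  "optF K p \<Lambda>0 cbar \<epsilon> m \<beta> k \<longleftrightarrow> feasF K p \<Lambda>0 \<epsilon> m \<beta> k \<and>
     (\<forall>\<beta>' k'. feasF K p \<Lambda>0 \<epsilon> m \<beta>' k' \<longrightarrow> cost cbar \<Lambda>0 m \<beta> k \<le> cost cbar \<Lambda>0 m \<beta>' k')"

definition Wset :: "nat \<Rightarrow> (nat \<Rightarrow> real) \<Rightarrow> (nat \<Rightarrow> real) \<Rightarrow> (real \<Rightarrow> real) \<Rightarrow> real \<Rightarrow> nat \<Rightarrow> nat set" where
  "Wset K p \<Lambda>0 cbar \<epsilon> m = {k. \<exists>\<beta>. optF K p \<Lambda>0 cbar \<epsilon> m \<beta> k}"

definition feasG :: "nat \<Rightarrow> (nat \<Rightarrow> real) \<Rightarrow> (nat \<Rightarrow> real) \<Rightarrow> real \<Rightarrow> nat \<Rightarrow> nat \<Rightarrow> real \<Rightarrow> bool" where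
  "feasG K p \<Lambda>0 \<epsilon> i m \<beta> \<longleftrightarrow> \<beta> \<ge> 0 \<and>
     p i * UB \<beta> (Lam \<Lambda>0 m i) \<le> \<epsilon> - (\<Sum>k=i+1..K. p k)"

definition optG :: "nat \<Rightarrow> (nat \<Rightarrow> real) \<Rightarrow> (nat \<Rightarrow> real) \<Rightarrow> (real \<Rightarrow> real) \<Rightarrow> real \<Rightarrow> nat \<Rightarrow> nat \<Rightarrow> real \<Rightarrow> bool" where
  "optG K p \<Lambda>0 cbar \<epsilon> i m \<beta> \<longleftrightarrow> feasG K p \<Lambda>0 \<epsilon> i m \<beta> \<and>
     (\<forall>\<beta>'. feasG K p \<Lambda>0 \<epsilon> i m \<beta>' \<longrightarrow> cost cbar \<Lambda>0 m \<beta> i \<le> cost cbar \<Lambda>0 m \<beta>' i)"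

end

theory Submission
  imports Defs "HOL-Real_Asymp.Real_Asymp"
begin

text \<open>In the Halfin-Whitt scaling \<open>n = \<lambda> + \<beta> sqrt \<lambda>\<close> the Erlang-C function tends to
  \<open>1 / (1 + \<beta> \<Phi>(\<beta>) / \<phi>(\<beta>))\<close> (dominated convergence after the substitution
  \<open>t = s / sqrt \<lambda>\<close>), and so does the bound \<open>UB\<close>. With key scenario \<open>\<omega>\<^sub>i\<close>, every scenario
  of smaller arrival rate is overstaffed by a margin of order \<open>m\<close> and contributes nothing in the
  limit, while every scenario of larger rate is understaffed and always waits. So both
  constraints tend to \<open>p\<^sub>i / (1 + \<beta> \<Phi>(\<beta>) / \<phi>(\<beta>)) \<le> \<epsilon> - \<Sum>\<^sub>k\<^sub>>\<^sub>i p\<^sub>k\<close>, whose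
  left-hand side is strictly decreasing in \<open>\<beta>\<close>; the optimal \<open>\<beta>\<close>, being the least feasible one,
  converges to the crossing point \<open>\<beta>*\<close>. Key scenario \<open>\<omega>\<^sub>i\<close> is optimal for \<open>F\<^sub>m\<close>: a
  feasible staffing must exceed the arrival rate of \<open>\<omega>\<^sub>i\<close> (else the scenarios \<open>i, \<dots>, K\<close>, of total
  probability above \<open>\<epsilon>\<close>, all wait), so it is also attained with key \<open>\<omega>\<^sub>i\<close>.\<close>

section \<open>The continuous Erlang-C function\<close>

lemma integrable_exp_moment:
  assumes "l > 0"
  shows "integrable lborel (\<lambda>t. indicator {0..} t * (t ^ k * exp (- l * t)) :: real)"
proof -
  have "(\<integral>\<^sup>+ x. ennreal (erlang_density 0 l x * x ^ k) \<partial>lborel) < \<infinity>"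
    using nn_integral_erlang_ith_moment[OF assms, of 0 k] by simp
  hence "integrable lborel (\<lambda>x. erlang_density 0 l x * x ^ k)"
    by (intro integrableI_nonneg) (auto simp: assms less_imp_le erlang_density_def)
  hence "integrable lborel (\<lambda>x. (1 / l) * (erlang_density 0 l x * x ^ k))" by simp
  thus ?thesis
    by (rule Bochner_Integration.integrable_cong[THEN iffD1, rotated -1])
       (use assms in \<open>auto simp: erlang_density_def indicator_def\<close>)
qed

lemma ln_one_plus_le_two_sqrt:
  fixes t :: real assumes "t \<ge> 0" shows "ln (1 + t) \<le> 2 * sqrt t"
proof -
  have "ln (1 + t) = 2 * ln (sqrt (1 + t))" using assms by (simp add: ln_sqrt)
  also have "\<dots> \<le> 2 * (sqrt (1 + t) - 1)" using ln_le_minus_one[of "sqrt (1 + t)"] assms by simp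
  also have "sqrt (1 + t) \<le> sqrt ((1 + sqrt t)\<^sup>2)"
    using assms by (intro real_sqrt_le_mono) (simp add: power2_sum)
  finally show ?thesis using assms by simp
qed

lemma one_plus_powr_le_exp:
  fixes t l n :: real assumes "t \<ge> 0" "l > 0"
  shows "(1 + t) powr (n - 1) \<le> exp (2 * (max 0 (n - 1))\<^sup>2 / l) * exp (l / 2 * t)"
proof -
  define k where "k = max 0 (n - 1)"
  have k0: "k \<ge> 0" by (simp add: k_def)
  have young: "k * (2 * sqrt t) \<le> 2 * k\<^sup>2 / l + l / 2 * t"
  proof -
    have "0 \<le> (l / 2) * (sqrt t - 2 * k / l)\<^sup>2" using assms by simp
    also have "\<dots> = (l / 2) * (sqrt t * sqrt t) - 2 * k * sqrt t + 2 * (k * k) / l"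
      using assms by (simp add: power2_eq_square field_simps)
    finally show ?thesis using assms by (simp add: power2_eq_square)
  qed
  have "(1 + t) powr (n - 1) \<le> (1 + t) powr k"
    using assms by (intro powr_mono) (auto simp: k_def)
  also have "\<dots> = exp (k * ln (1 + t))" using assms by (simp add: powr_def)
  also have "\<dots> \<le> exp (k * (2 * sqrt t))"
    using ln_one_plus_le_two_sqrt[OF assms(1)] k0 by (simp add: mult_left_mono)
  also have "\<dots> \<le> exp (2 * k\<^sup>2 / l + l / 2 * t)" using young by simp
  finally show ?thesis by (simp add: k_def exp_add)
qed

lemma erlang_integrand_integrable:
  fixes l n :: real assumes "l > 0"
  shows "set_integrable lborel {0..} (\<lambda>t. t * exp (- l * t) * (1 + t) powr (n - 1))"
proof -
  define C where "C = exp (2 * (max 0 (n - 1))\<^sup>2 / l)"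
  have "integrable lborel (\<lambda>t. C * (indicator {0..} t * (t ^ 1 * exp (- (l / 2) * t))) :: real)"
    using integrable_exp_moment[of "l / 2" 1] assms by simp
  then show ?thesis unfolding set_integrable_def
  proof (rule Bochner_Integration.integrable_bound)
    show "(\<lambda>x. indicat_real {0..} x *\<^sub>R (x * exp (- l * x) * (1 + x) powr (n - 1))) \<in> borel_measurable lborel"
      by measurable
    show "AE x in lborel. norm (indicat_real {0..} x *\<^sub>R (x * exp (- l * x) * (1 + x) powr (n - 1)))
          \<le> norm (C * (indicat_real {0..} x * (x ^ 1 * exp (- (l / 2) * x))))"
    proof (rule AE_I2)
      fix x :: real
      show "norm (indicat_real {0..} x *\<^sub>R (x * exp (- l * x) * (1 + x) powr (n - 1)))
          \<le> norm (C * (indicat_real {0..} x * (x ^ 1 * exp (- (l / 2) * x))))"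
      proof (cases "x \<ge> 0")
        case True
        have "x * exp (- l * x) * (1 + x) powr (n - 1) \<le> x * exp (- l * x) * (C * exp (l / 2 * x))"
          using one_plus_powr_le_exp[OF True assms, of n] True unfolding C_def
          by (intro mult_left_mono) auto
        also have "\<dots> = C * (x * exp (- (l / 2) * x))"
          by (simp add: field_simps flip: exp_add)
        finally show ?thesis using True by (simp add: C_def)
      qed simp
    qed
  qed
qed

lemma set_integral_Ici_Ioi: fixes f :: "real \<Rightarrow> real"
  shows "(LBINT x:{0..}. f x) = (LBINT x:{0<..}. f x)"
  by (rule set_integral_discrete_difference[where X="{0}"]) (auto simp: le_less)

lemma set_integrable_Ici_Ioi:
  "set_integrable lborel {0..} f \<longleftrightarrow> set_integrable lborel {0<..} (f :: real \<Rightarrow> real)"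
  by (rule set_integrable_discrete_difference[where X="{0}"]) (auto simp: le_less)

lemma set_integral_Ici_FTC_nonneg:
  fixes f F :: "real \<Rightarrow> real"
  assumes "\<And>x. x > 0 \<Longrightarrow> DERIV F x :> f x" and "\<And>x. x > 0 \<Longrightarrow> isCont f x"
    and "\<And>x. x > 0 \<Longrightarrow> f x \<ge> 0"
    and "(F \<longlongrightarrow> A) (at_right 0)" and "(F \<longlongrightarrow> B) at_top"
  shows "(LBINT x:{0..}. f x) = B - A"
proof -
  have "(LBINT x=ereal 0..\<infinity>. f x) = B - A"
    by (intro interval_integral_FTC_nonneg[where F=F])
       (use assms in \<open>auto simp: ereal_tendsto_simps\<close>)
  thus ?thesis by (simp add: set_integral_Ici_Ioi interval_integral_to_infinity_eq)
qed

lemma set_integral_Ici_FTC_integrable: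
  fixes f F :: "real \<Rightarrow> real"
  assumes "\<And>x. x > 0 \<Longrightarrow> DERIV F x :> f x" and "\<And>x. x > 0 \<Longrightarrow> isCont f x"
    and "set_integrable lborel {0..} f"
    and "(F \<longlongrightarrow> A) (at_right 0)" and "(F \<longlongrightarrow> B) at_top"
  shows "(LBINT x:{0..}. f x) = B - A"
proof -
  have "(LBINT x=ereal 0..\<infinity>. f x) = B - A"
    by (intro interval_integral_FTC_integrable[where F=F])
       (use assms in \<open>auto simp: ereal_tendsto_simps set_integrable_Ici_Ioi
          has_real_derivative_iff_has_vector_derivative[symmetric]\<close>)
  thus ?thesis by (simp add: set_integral_Ici_Ioi interval_integral_to_infinity_eq)
qed

lemma set_integral_Ici_lower_bound:
  fixes f :: "real \<Rightarrow> real"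
  assumes "set_integrable lborel {0..} f" and "\<And>x. x \<ge> 0 \<Longrightarrow> f x \<ge> 0"
    and "\<And>x. x \<in> {1..2} \<Longrightarrow> c \<le> f x"
  shows "c \<le> (LBINT x:{0..}. f x)"
proof -
  have "integral\<^sup>L lborel (\<lambda>x::real. c * indicator {1..2::real} x) \<le>
        integral\<^sup>L lborel (\<lambda>x. indicator {0..} x *\<^sub>R f x)"
  proof (rule integral_mono)
    show "integrable lborel (\<lambda>x. indicator {0..} x *\<^sub>R f x)"
      using assms(1) unfolding set_integrable_def .
    show "c * indicator {1..2} x \<le> indicator {0..} x *\<^sub>R f x" for x :: real
      using assms(2,3)[of x] by (auto simp: indicator_def)
  qed simp
  thus ?thesis by (simp add: set_lebesgue_integral_def)
qed

lemma continuous_on_set_integral_Ici: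
  fixes f :: "real \<Rightarrow> real \<Rightarrow> real" and w :: "real \<Rightarrow> real"
  assumes int: "\<And>p. p \<in> S \<Longrightarrow> set_integrable lborel {0..} (f p)"
    and dom: "set_integrable lborel {0..} w" "\<And>p x. p \<in> S \<Longrightarrow> x \<ge> 0 \<Longrightarrow> \<bar>f p x\<bar> \<le> w x"
    and cont: "\<And>x. x \<ge> 0 \<Longrightarrow> continuous_on S (\<lambda>p. f p x)"
  shows "continuous_on S (\<lambda>p. LBINT x:{0..}. f p x)"
  unfolding continuous_on_eq_continuous_within
proof
  fix a assume a: "a \<in> S"
  show "continuous (at a within S) (\<lambda>p. LBINT x:{0..}. f p x)"
  proof (rule continuous_within_sequentiallyI)
    fix u :: "nat \<Rightarrow> real" assume u: "u \<longlonglongrightarrow> a" "\<forall>n. u n \<in> S"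
    show "(\<lambda>n. LBINT x:{0..}. f (u n) x) \<longlonglongrightarrow> (LBINT x:{0..}. f a x)"
      unfolding set_lebesgue_integral_def
    proof (rule integral_dominated_convergence[where w="\<lambda>x. indicator {0..} x *\<^sub>R w x"])
      show "(\<lambda>x. indicat_real {0..} x *\<^sub>R f a x) \<in> borel_measurable lborel"
        using int[OF a] unfolding set_integrable_def by (rule borel_measurable_integrable)
      show "(\<lambda>x. indicat_real {0..} x *\<^sub>R f (u n) x) \<in> borel_measurable lborel" for n
        using int[of "u n"] u(2) unfolding set_integrable_def by (simp add: borel_measurable_integrable)
      show "integrable lborel (\<lambda>x. indicat_real {0..} x *\<^sub>R w x)"
        using dom(1) unfolding set_integrable_def .
      show "AE x in lborel. (\<lambda>n. indicat_real {0..} x *\<^sub>R f (u n) x) \<longlonglongrightarrow> indicat_real {0..} x *\<^sub>R f a x"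
      proof (rule AE_I2)
        fix x :: real
        show "(\<lambda>n. indicat_real {0..} x *\<^sub>R f (u n) x) \<longlonglongrightarrow> indicat_real {0..} x *\<^sub>R f a x"
          using continuous_on_tendsto_compose[OF cont u(1) a] u(2) by (cases "x \<ge> 0") simp_all
      qed
      show "AE x in lborel. norm (indicat_real {0..} x *\<^sub>R f (u n) x) \<le> indicat_real {0..} x *\<^sub>R w x" for n
        using dom(2)[of "u n"] u(2) by (intro AE_I2) (auto simp: indicator_def)
    qed
  qed
qed

definition erlang_integral :: "real \<Rightarrow> real \<Rightarrow> real" where
  "erlang_integral n l = (LBINT t:{0..}. t * exp (- l * t) * (1 + t) powr (n - 1))"

lemma erlangC_eq_integral: "erlangC n l = min 1 (inverse (l * erlang_integral n l))"
  by (simp add: erlangC_def erlang_integral_def)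

lemma erlang_integral_mono:
  assumes "l > 0" "n \<le> n'" shows "erlang_integral n l \<le> erlang_integral n' l"
  unfolding erlang_integral_def
proof (rule set_integral_mono[OF erlang_integrand_integrable[OF assms(1)] erlang_integrand_integrable[OF assms(1)]])
  fix x :: real assume "x \<in> {0..}"
  hence "(1 + x) powr (n - 1) \<le> (1 + x) powr (n' - 1)" using assms by (intro powr_mono) auto
  thus "x * exp (- l * x) * (1 + x) powr (n - 1) \<le> x * exp (- l * x) * (1 + x) powr (n' - 1)"
    using \<open>x \<in> {0..}\<close> by (intro mult_left_mono) auto
qed

text \<open>At \<open>n = l\<close> the integrand is, up to the factor \<open>l\<close>, the derivative of \<open>-(1 + t) powr l * exp (- l * t)\<close>.\<close>
lemma erlang_integral_at_load: assumes "l > 0" shows "l * erlang_integral l l = 1"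
proof -
  let ?f = "\<lambda>x. l * (x * exp (- l * x) * (1 + x) powr (l - 1))"
  let ?F = "\<lambda>x::real. - ((1 + x) powr l * exp (- l * x))"
  have "(LBINT x:{0..}. ?f x) = 0 - (-1)"
  proof (rule set_integral_Ici_FTC_nonneg)
    fix x :: real assume x: "x > 0"
    have e: "(1 + x) powr l = (1 + x) * (1 + x) powr (l - 1)"
      using x by (simp add: powr_diff)
    show "DERIV ?F x :> ?f x"
      using x by (auto intro!: derivative_eq_intros simp: e field_simps)
    show "isCont ?f x" using x by (auto intro!: continuous_intros)
    show "?f x \<ge> 0" using x assms by simp
  next
    show "(?F \<longlongrightarrow> -1) (at_right 0)"
      by (rule tendsto_eq_intros | simp)+
  next
    have "filterlim (\<lambda>x::real. l * (ln (1 + x) - x)) at_bot at_top"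
      using assms by (intro filterlim_tendsto_pos_mult_at_bot[OF tendsto_const]) (auto, real_asymp)
    hence "((\<lambda>x. - exp (l * (ln (1 + x) - x))) \<longlongrightarrow> - 0) at_top"
      by (intro tendsto_minus filterlim_compose[OF exp_at_bot])
    hence "((\<lambda>x. - exp (l * (ln (1 + x) - x))) \<longlongrightarrow> 0) at_top" by simp
    thus "(?F \<longlongrightarrow> 0) at_top"
    proof (rule tendsto_cong[THEN iffD1, rotated])
      show "\<forall>\<^sub>F x in at_top. - exp (l * (ln (1 + x) - x)) = ?F x"
        using eventually_gt_at_top[of 0]
        by eventually_elim (simp add: powr_def algebra_simps exp_diff exp_minus field_simps)
    qed
  qed
  thus ?thesis unfolding erlang_integral_def by simp
qed

lemma erlang_integral_pos: assumes "l > 0" shows "erlang_integral n l > 0"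
proof -
  define c where "c = exp (- 2 * l) * min (2 powr (n - 1)) (3 powr (n - 1))"
  have "c \<le> erlang_integral n l" unfolding erlang_integral_def
  proof (rule set_integral_Ici_lower_bound[OF erlang_integrand_integrable[OF assms]])
    fix x :: real assume x: "x \<in> {1..2}"
    have "min (2 powr (n - 1)) (3 powr (n - 1)) \<le> (1 + x) powr (n - 1)"
    proof (cases "n - 1 \<ge> 0")
      case True thus ?thesis using x by (intro min.coboundedI1 powr_mono2) auto
    next
      case False thus ?thesis using x by (intro min.coboundedI2 powr_mono2') auto
    qed
    moreover have "exp (- 2 * l) \<le> exp (- l * x)" using x assms by simp
    ultimately have "c \<le> 1 * exp (- l * x) * (1 + x) powr (n - 1)"
      unfolding c_def by (simp add: mult_mono)
    also have "\<dots> \<le> x * exp (- l * x) * (1 + x) powr (n - 1)"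
      using x by (intro mult_right_mono) auto
    finally show "c \<le> x * exp (- l * x) * (1 + x) powr (n - 1)" .
  qed simp
  moreover have "c > 0" by (simp add: c_def)
  ultimately show ?thesis by simp
qed

lemma erlangC_eq_1: assumes "l > 0" "n \<le> l" shows "erlangC n l = 1"
proof -
  have "l * erlang_integral n l \<le> 1"
    using erlang_integral_mono[OF assms] erlang_integral_at_load[OF assms(1)] assms(1)
    by (metis mult_left_mono less_imp_le)
  moreover have "l * erlang_integral n l > 0" using erlang_integral_pos[OF assms(1)] assms by simp
  ultimately have "inverse (l * erlang_integral n l) \<ge> 1" by (intro one_le_inverse)
  thus ?thesis by (simp add: erlangC_eq_integral)
qed

lemma erlangC_antimono: assumes "l > 0" "n \<le> n'" shows "erlangC n' l \<le> erlangC n l"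
proof -
  have "l * erlang_integral n l \<le> l * erlang_integral n' l"
    using erlang_integral_mono[OF assms] assms by simp
  moreover have "l * erlang_integral n l > 0" using erlang_integral_pos[OF assms(1)] assms by simp
  ultimately have "inverse (l * erlang_integral n' l) \<le> inverse (l * erlang_integral n l)"
    by (rule le_imp_inverse_le)
  thus ?thesis by (simp add: erlangC_eq_integral min.coboundedI2)
qed

lemma erlangC_nonneg: assumes "l > 0" shows "0 \<le> erlangC n l"
  using erlang_integral_pos[OF assms, of n] assms by (simp add: erlangC_eq_integral)

lemma isCont_erlang_integral: assumes "l > 0" shows "isCont (\<lambda>n. erlang_integral n l) n"
proof -
  define N where "N = n + 1"
  have "continuous_on {n - 1..N} (\<lambda>n. erlang_integral n l)"
    unfolding erlang_integral_def
  proof (rule continuous_on_set_integral_Ici[where w = "\<lambda>t. t * exp (- l * t) * (1 + t) powr (N - 1)"])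
    show "set_integrable lborel {0..} (\<lambda>t. t * exp (- l * t) * (1 + t) powr (p - 1))" for p
      using erlang_integrand_integrable[OF assms] .
    show "set_integrable lborel {0..} (\<lambda>t. t * exp (- l * t) * (1 + t) powr (N - 1))"
      using erlang_integrand_integrable[OF assms] .
    show "\<bar>x * exp (- l * x) * (1 + x) powr (p - 1)\<bar> \<le> x * exp (- l * x) * (1 + x) powr (N - 1)"
      if "p \<in> {n - 1..N}" "x \<ge> 0" for p x :: real
      using that by (simp add: mult_left_mono powr_mono)
    show "continuous_on {n - 1..N} (\<lambda>p. x * exp (- l * x) * (1 + x) powr (p - 1))"
      if "x \<ge> 0" for x :: real
      using that by (intro continuous_intros) auto
  qed
  moreover have "n \<in> interior {n - 1..N}" by (auto simp: N_def)
  ultimately show ?thesis using continuous_on_interior by blast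
qed

lemma isCont_erlangC: assumes "l > 0" shows "isCont (\<lambda>n. erlangC n l) n"
  unfolding erlangC_eq_integral[abs_def]
  using erlang_integral_pos[OF assms, of n] assms
  by (intro continuous_intros isCont_erlang_integral[OF assms]) auto

section \<open>The Gaussian functions of the Halfin-Whitt regime\<close>

text \<open>\<open>Phi_ratio b = Phi b / phi b\<close> (lemma \<open>Phi_div_phi\<close>); \<open>1 / hw_denom b\<close> is the
  Halfin-Whitt delay probability.\<close>
definition Phi_ratio :: "real \<Rightarrow> real" where
  "Phi_ratio b = (LBINT s:{0..}. exp (b * s - s\<^sup>2 / 2))"

definition hw_denom :: "real \<Rightarrow> real" where
  "hw_denom b = (LBINT s:{0..}. s * exp (b * s - s\<^sup>2 / 2))"

lemma gauss_exponent_le: fixes b s :: real shows "b * s - s\<^sup>2 / 2 \<le> (b + 1)\<^sup>2 / 2 - s"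
proof -
  have "0 \<le> (s - (b + 1))\<^sup>2 / 2" by simp
  thus ?thesis by (simp add: power2_eq_square field_simps)
qed

lemma gauss_moment_integrable:
  fixes b :: real shows "set_integrable lborel {0..} (\<lambda>s. s ^ k * exp (b * s - s\<^sup>2 / 2))"
proof -
  have "integrable lborel (\<lambda>t. exp ((b + 1)\<^sup>2 / 2) * (indicator {0..} t * (t ^ k * exp (- 1 * t))) :: real)"
    using integrable_exp_moment[of 1 k] by simp
  thus ?thesis unfolding set_integrable_def
  proof (rule Bochner_Integration.integrable_bound)
    show "(\<lambda>x. indicat_real {0..} x *\<^sub>R (x ^ k * exp (b * x - x\<^sup>2 / 2))) \<in> borel_measurable lborel"
      by measurable
    show "AE x in lborel. norm (indicat_real {0..} x *\<^sub>R (x ^ k * exp (b * x - x\<^sup>2 / 2)))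
        \<le> norm (exp ((b + 1)\<^sup>2 / 2) * (indicat_real {0..} x * (x ^ k * exp (- 1 * x))))"
    proof (rule AE_I2)
      fix x :: real
      have "exp (b * x - x\<^sup>2 / 2) \<le> exp ((b + 1)\<^sup>2 / 2) * exp (- 1 * x)"
        using gauss_exponent_le[of b x] by (simp add: exp_add[symmetric])
      thus "norm (indicat_real {0..} x *\<^sub>R (x ^ k * exp (b * x - x\<^sup>2 / 2)))
        \<le> norm (exp ((b + 1)\<^sup>2 / 2) * (indicat_real {0..} x * (x ^ k * exp (- 1 * x))))"
        by (cases "x \<ge> 0") (auto simp: indicator_def mult_left_mono mult.left_commute)
    qed
  qed
qed

lemma Phi_ratio_integrable: fixes b :: real shows "set_integrable lborel {0..} (\<lambda>s. exp (b * s - s\<^sup>2 / 2))"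
  using gauss_moment_integrable[of 0 b] by simp

lemma hw_denom_integrable: fixes b :: real shows "set_integrable lborel {0..} (\<lambda>s. s * exp (b * s - s\<^sup>2 / 2))"
  using gauss_moment_integrable[of 1 b] by simp

text \<open>Integration by parts: \<open>(s - b) * exp (b * s - s\<^sup>2 / 2)\<close> is the derivative of
  \<open>- exp (b * s - s\<^sup>2 / 2)\<close>.\<close>
lemma hw_denom_eq: "hw_denom b = 1 + b * Phi_ratio b"
proof -
  let ?f = "\<lambda>s. (s - b) * exp (b * s - s\<^sup>2 / 2)"
  let ?F = "\<lambda>s. - exp (b * s - s\<^sup>2 / 2)"
  have int: "set_integrable lborel {0..} (\<lambda>s. s * exp (b * s - s\<^sup>2 / 2) - b * exp (b * s - s\<^sup>2 / 2))"
    using hw_denom_integrable Phi_ratio_integrable by (intro set_integral_diff) auto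
  have "(LBINT s:{0..}. ?f s) = 0 - (-1)"
  proof (rule set_integral_Ici_FTC_integrable)
    show "DERIV ?F x :> ?f x" for x
      by (auto intro!: derivative_eq_intros simp: field_simps power2_eq_square)
    show "isCont ?f x" for x by (auto intro!: continuous_intros)
    show "set_integrable lborel {0..} ?f" using int by (simp add: algebra_simps)
    show "(?F \<longlongrightarrow> -1) (at_right 0)" by (rule tendsto_eq_intros | simp)+
    show "(?F \<longlongrightarrow> 0) at_top" by real_asymp
  qed
  also have "(LBINT s:{0..}. ?f s) = (LBINT s:{0..}. s * exp (b * s - s\<^sup>2 / 2) - b * exp (b * s - s\<^sup>2 / 2))"
    by (simp add: algebra_simps)
  also have "\<dots> = hw_denom b - b * Phi_ratio b"
    using hw_denom_integrable Phi_ratio_integrable by (simp add: hw_denom_def Phi_ratio_def set_integral_diff)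
  finally show ?thesis by simp
qed

lemma Phi_ratio_mono: assumes "b \<le> b'" shows "Phi_ratio b \<le> Phi_ratio b'"
  unfolding Phi_ratio_def
proof (rule set_integral_mono[OF Phi_ratio_integrable Phi_ratio_integrable])
  fix x :: real assume "x \<in> {0..}"
  thus "exp (b * x - x\<^sup>2 / 2) \<le> exp (b' * x - x\<^sup>2 / 2)" using assms by (simp add: mult_right_mono)
qed

lemma Phi_ratio_pos: "Phi_ratio b > 0"
proof -
  have "exp (- 2 * \<bar>b\<bar> - 2) \<le> Phi_ratio b" unfolding Phi_ratio_def
  proof (rule set_integral_Ici_lower_bound[OF Phi_ratio_integrable])
    fix x :: real assume x: "x \<in> {1..2}"
    have "- 2 * \<bar>b\<bar> \<le> b * x"
    proof (cases "b \<ge> 0")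
      case True thus ?thesis using x by (simp add: order_trans[of _ 0])
    next
      case False
      hence "b * x \<ge> b * 2" using x by (intro mult_left_mono_neg) auto
      thus ?thesis using False by simp
    qed
    moreover have "x\<^sup>2 \<le> 2\<^sup>2" using x by (intro power_mono) auto
    ultimately show "exp (- 2 * \<bar>b\<bar> - 2) \<le> exp (b * x - x\<^sup>2 / 2)" by simp
  qed simp
  thus ?thesis by (meson exp_gt_zero less_le_trans)
qed

lemma isCont_Phi_ratio: "isCont Phi_ratio b"
proof -
  define B where "B = \<bar>b\<bar> + 1"
  have "continuous_on {-B..B} (\<lambda>p. LBINT s:{0..}. exp (p * s - s\<^sup>2 / 2))"
  proof (rule continuous_on_set_integral_Ici[where w="\<lambda>s. exp (B * s - s\<^sup>2 / 2)"])
    show "\<bar>exp (p * x - x\<^sup>2 / 2)\<bar> \<le> exp (B * x - x\<^sup>2 / 2)" if "p \<in> {-B..B}" "x \<ge> 0" for p x :: real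
      using that by (simp add: mult_right_mono)
    show "continuous_on {-B..B} (\<lambda>p. exp (p * x - x\<^sup>2 / 2))" for x
      by (intro continuous_intros)
  qed (rule Phi_ratio_integrable)+
  moreover have "b \<in> interior {-B..B}" by (auto simp: B_def)
  ultimately show ?thesis using continuous_on_interior unfolding Phi_ratio_def[abs_def] by blast
qed

lemma isCont_Phi_ratio_comp [continuous_intros]: "isCont f x \<Longrightarrow> isCont (\<lambda>x. Phi_ratio (f x)) x"
  by (rule isCont_o2[OF _ isCont_Phi_ratio])

lemma hw_denom_strict_mono: assumes "0 \<le> b" "b < b'" shows "hw_denom b < hw_denom b'"
proof -
  have "b * Phi_ratio b < b' * Phi_ratio b" using Phi_ratio_pos[of b] assms by simp
  also have "\<dots> \<le> b' * Phi_ratio b'" using Phi_ratio_mono[of b b'] assms by (intro mult_left_mono) auto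
  finally show ?thesis by (simp add: hw_denom_eq)
qed

lemma hw_denom_ge_1: assumes "0 \<le> b" shows "1 \<le> hw_denom b"
  using assms Phi_ratio_pos[of b] by (simp add: hw_denom_eq)

lemma Phi_div_phi: "Phi_std b / phi_std b = Phi_ratio b"
proof -
  have phi_pos: "phi_std b > 0" by (simp add: phi_std_def normal_density_pos)
  have "Phi_std b = integral\<^sup>L lborel (\<lambda>t. indicator {..b} t *\<^sub>R std_normal_density t)"
    by (simp add: Phi_std_def set_lebesgue_integral_def)
  also have "\<dots> = \<bar>-1\<bar> *\<^sub>R integral\<^sup>L lborel
      (\<lambda>x. indicator {..b} (b + (-1) * x) *\<^sub>R std_normal_density (b + (-1) * x))"
    by (rule lborel_integral_real_affine) simp
  also have "\<dots> = integral\<^sup>L lborel (\<lambda>x. phi_std b * (indicator {0..} x *\<^sub>R exp (b * x - x\<^sup>2 / 2)))"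
  proof -
    have "indicator {..b} (b + (-1) * x) *\<^sub>R std_normal_density (b + (-1) * x) =
          phi_std b * (indicator {0..} x *\<^sub>R exp (b * x - x\<^sup>2 / 2))" for x :: real
    proof -
      have "exp (- (b + - 1 * x)\<^sup>2 / 2) = exp (- b\<^sup>2 / 2) * exp (b * x - x\<^sup>2 / 2)"
        by (simp add: exp_add[symmetric] power2_eq_square field_simps)
      thus ?thesis by (simp add: phi_std_def std_normal_density_def indicator_def)
    qed
    thus ?thesis by simp
  qed
  also have "\<dots> = phi_std b * Phi_ratio b"
    by (simp add: Phi_ratio_def set_lebesgue_integral_def)
  finally show ?thesis using phi_pos by simp
qed

lemma hw_inverse_crossing:
  assumes "0 < \<rho>" "\<rho> < 1"
  obtains b where "b > 0"
    and "\<And>b'. b < b' \<Longrightarrow> inverse (hw_denom b') < \<rho>"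
    and "\<And>b'. 0 \<le> b' \<Longrightarrow> b' < b \<Longrightarrow> \<rho> < inverse (hw_denom b')"
proof -
  define b0 where "b0 = (1 / \<rho>) / Phi_ratio 0"
  have b00: "b0 \<ge> 0" using Phi_ratio_pos[of 0] assms by (simp add: b0_def)
  have "1 / \<rho> = b0 * Phi_ratio 0" using Phi_ratio_pos[of 0] by (simp add: b0_def)
  also have "\<dots> \<le> hw_denom b0"
    using mult_left_mono[OF Phi_ratio_mono[OF b00] b00] by (simp add: hw_denom_eq)
  finally have "1 / \<rho> \<le> hw_denom b0" .
  moreover have "hw_denom 0 < 1 / \<rho>" using assms by (simp add: hw_denom_eq)
  moreover have "isCont hw_denom x" for x
    unfolding hw_denom_eq[abs_def] by (intro continuous_intros)
  ultimately obtain b where b: "0 \<le> b" "hw_denom b = 1 / \<rho>"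
    using IVT[of hw_denom 0 "1 / \<rho>" b0] b00 by force
  with \<open>hw_denom 0 < 1 / \<rho>\<close> have "b > 0" by (cases "b = 0") auto
  moreover have "inverse (hw_denom b') < \<rho>" if "b < b'" for b'
  proof -
    have "inverse (hw_denom b') < inverse (hw_denom b)"
      using hw_denom_strict_mono[OF b(1) that] hw_denom_ge_1[OF b(1)] by (intro less_imp_inverse_less) auto
    thus ?thesis using b(2) by simp
  qed
  moreover have "\<rho> < inverse (hw_denom b')" if "0 \<le> b'" "b' < b" for b'
  proof -
    have "inverse (hw_denom b) < inverse (hw_denom b')"
      using hw_denom_strict_mono[OF that] hw_denom_ge_1[OF that(1)] by (intro less_imp_inverse_less) auto
    thus ?thesis using b(2) by simp
  qed
  ultimately show thesis using that by blast
qed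

section \<open>Limits in the Halfin-Whitt regime\<close>

lemma ln_one_plus_le: fixes u :: real assumes "u \<ge> 0" shows "ln (1 + u) \<le> u - u\<^sup>2 / (2 * (1 + u))"
proof -
  let ?g = "\<lambda>u::real. u - u\<^sup>2 / (2 * (1 + u)) - ln (1 + u)"
  have "?g 0 \<le> ?g u"
  proof (rule DERIV_nonneg_imp_nondecreasing[OF assms])
    fix x :: real assume x: "0 \<le> x" "x \<le> u"
    have d: "(2 + 2 * x) * (2 + 2 * x) = 4 * (1 + x)\<^sup>2" by (simp add: power2_eq_square algebra_simps)
    have e: "1 - (2 * x * (2 + 2 * x) - x\<^sup>2 * 2) / ((2 + 2 * x) * (2 + 2 * x)) - 1 / (1 + x)
        = x\<^sup>2 / (2 * (1 + x)\<^sup>2)"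
      using x unfolding d by (simp add: divide_simps) (simp add: algebra_simps power2_eq_square)
    have "DERIV ?g x :> x\<^sup>2 / (2 * (1 + x)\<^sup>2)"
      using x by (auto intro!: derivative_eq_intros simp: e)
    thus "\<exists>y. DERIV ?g x :> y \<and> y \<ge> 0" by (intro exI[of _ "x\<^sup>2 / (2 * (1 + x)\<^sup>2)"]) simp
  qed
  thus ?thesis by simp
qed

text \<open>After the substitution \<open>t = s / sqrt l\<close>, \<open>l * erlang_integral (l + b * sqrt l) l\<close>
  becomes the integral of the following integrand, which tends to that of \<open>hw_denom b\<close>.\<close>
lemma hw_integrand_tendsto:
  fixes x b :: real assumes "x \<ge> 0"
  shows "((\<lambda>l. x * exp (- sqrt l * x) * (1 + x / sqrt l) powr (l + b * sqrt l - 1))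
           \<longlongrightarrow> x * exp (b * x - x\<^sup>2 / 2)) at_top"
proof -
  have "((\<lambda>l. - sqrt l * x + (l + b * sqrt l - 1) * ln (1 + x / sqrt l)) \<longlongrightarrow> b * x - x * x / 2) at_top"
    by real_asymp
  hence "((\<lambda>l. x * exp (- sqrt l * x + (l + b * sqrt l - 1) * ln (1 + x / sqrt l)))
           \<longlongrightarrow> x * exp (b * x - x\<^sup>2 / 2)) at_top"
    by (intro tendsto_mult tendsto_const tendsto_exp) (simp add: power2_eq_square)
  thus ?thesis
  proof (rule tendsto_cong[THEN iffD1, rotated])
    show "\<forall>\<^sub>F l in at_top. x * exp (- sqrt l * x + (l + b * sqrt l - 1) * ln (1 + x / sqrt l)) =
       x * exp (- sqrt l * x) * (1 + x / sqrt l) powr (l + b * sqrt l - 1)"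
      using eventually_gt_at_top[of 0]
    proof eventually_elim
      case (elim l)
      have "1 + x / sqrt l > 0" using elim assms by (simp add: add_pos_nonneg)
      hence "(1 + x / sqrt l) powr (l + b * sqrt l - 1) = exp ((l + b * sqrt l - 1) * ln (1 + x / sqrt l))"
        by (simp add: powr_def)
      thus ?case by (simp only: exp_add mult.assoc)
    qed
  qed
qed

lemma hw_exponent_le:
  fixes b l x :: real assumes b: "b \<ge> 0" and l: "l \<ge> 2" and x: "x \<ge> 0"
  shows "- sqrt l * x + (l + b * sqrt l - 1) * ln (1 + x / sqrt l) \<le> b * x - x\<^sup>2 / (4 * (1 + x / sqrt l))"
proof -
  define r where "r = sqrt l"
  have r0: "r > 0" and rr: "r * r = l" using l by (simp_all add: r_def)
  define u where "u = x / r"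
  have u0: "u \<ge> 0" using x r0 by (simp add: u_def)
  define e where "e = l + b * r - 1"
  have e1: "e \<ge> l / 2" using l mult_nonneg_nonneg[OF b less_imp_le[OF r0]] by (simp add: e_def)
  have A1: "e * ln (1 + u) \<le> e * (u - u\<^sup>2 / (2 * (1 + u)))"
    using ln_one_plus_le[OF u0] e1 l by (intro mult_left_mono) auto
  have A2: "e * u \<le> r * x + b * x"
  proof -
    have "e * u = (r * r + b * r - 1) * x / r" unfolding e_def u_def rr by simp
    also have "\<dots> = r * x + b * x - x / r" using r0 by (simp add: field_simps)
    finally show ?thesis using x r0 by simp
  qed
  have A3: "e * (u\<^sup>2 / (2 * (1 + u))) \<ge> (l / 2) * (u\<^sup>2 / (2 * (1 + u)))"
    using e1 u0 by (intro mult_right_mono) auto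
  have A4: "(l / 2) * (u\<^sup>2 / (2 * (1 + u))) = x\<^sup>2 / (4 * (1 + u))"
  proof -
    have "r * 4 + x * 4 > 0" "r * (r * 4) + r * (x * 4) > 0" using r0 x by (simp_all add: add_pos_nonneg)
    thus ?thesis unfolding u_def using r0 by (simp add: rr[symmetric] power2_eq_square field_simps)
  qed
  have "- r * x + e * ln (1 + u) \<le> b * x - x\<^sup>2 / (4 * (1 + u))"
    using A1 A2 A3 A4 unfolding right_diff_distrib by linarith
  thus ?thesis by (simp only: r_def u_def e_def)
qed

text \<open>The integrable majorant for dominated convergence: by the previous lemma the exponent is
  quadratic in \<open>x\<close> for \<open>x \<le> sqrt l\<close> and at most \<open>- x\<close> beyond.\<close>
lemma hw_integrand_bound:
  fixes b l x :: real
  assumes b: "b \<ge> 0" and l: "l \<ge> 2" and lb: "sqrt l \<ge> 8 * (b + 1)" and x: "x \<ge> 0"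
  shows "x * exp (- sqrt l * x) * (1 + x / sqrt l) powr (l + b * sqrt l - 1)
         \<le> exp (2 * (b + 2)\<^sup>2) * exp (- x) + x * exp (- x)"
proof -
  define u where "u = x / sqrt l"
  have u0: "u \<ge> 0" unfolding u_def using x l by (intro divide_nonneg_nonneg) auto
  define E where "E = - sqrt l * x + (l + b * sqrt l - 1) * ln (1 + u)"
  have Eb: "E \<le> b * x - x\<^sup>2 / (4 * (1 + u))"
    using hw_exponent_le[OF b l x] by (simp only: E_def u_def)
  have "x * exp E \<le> exp (2 * (b + 2)\<^sup>2) * exp (- x) + x * exp (- x)"
  proof (cases "u \<le> 1")
    case True
    have "x\<^sup>2 / 8 \<le> x\<^sup>2 / (4 * (1 + u))" using True u0 by (intro divide_left_mono) auto
    hence "E \<le> b * x - x\<^sup>2 / 8" using Eb by linarith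
    hence "x * exp E \<le> x * exp (b * x - x\<^sup>2 / 8)" using x by (intro mult_left_mono) auto
    also have "\<dots> \<le> exp x * exp (b * x - x\<^sup>2 / 8)"
      using exp_ge_add_one_self[of x] by (intro mult_right_mono) (linarith, simp)
    also have "\<dots> = exp ((b + 2) * x - x\<^sup>2 / 8) * exp (- x)"
      by (simp add: exp_add[symmetric] algebra_simps)
    also have "\<dots> \<le> exp (2 * (b + 2)\<^sup>2) * exp (- x)"
    proof -
      have "0 \<le> (x - 4 * (b + 2))\<^sup>2 / 8" by simp
      hence "(b + 2) * x - x\<^sup>2 / 8 \<le> 2 * (b + 2)\<^sup>2" by (simp add: power2_eq_square field_simps)
      thus ?thesis by simp
    qed
    finally show ?thesis using x by (simp add: add_increasing2)
  next
    case False
    have r0: "sqrt l > 0" using l by simp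
    have "x\<^sup>2 / (4 * (2 * u)) \<le> x\<^sup>2 / (4 * (1 + u))" using u0 False by (intro divide_left_mono) auto
    moreover have "x\<^sup>2 / (4 * (2 * u)) = x * sqrt l / 8"
      using False r0 unfolding u_def by (auto simp: power2_eq_square field_simps)
    moreover have "x * (8 * (b + 1)) \<le> x * sqrt l" using lb x by (intro mult_left_mono) auto
    ultimately have "E \<le> - x" using Eb by (simp add: algebra_simps)
    hence "x * exp E \<le> x * exp (- x)" using x by (intro mult_left_mono) auto
    thus ?thesis by (simp add: add_increasing)
  qed
  moreover have "(1 + u) powr (l + b * sqrt l - 1) = exp ((l + b * sqrt l - 1) * ln (1 + u))"
    using u0 by (simp add: powr_def)
  hence "x * exp (- sqrt l * x) * (1 + u) powr (l + b * sqrt l - 1) = x * exp E"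
    unfolding E_def by (simp only: exp_add mult.assoc)
  ultimately show ?thesis by (simp only: u_def)
qed

lemma erlang_integral_rescale: assumes "l > 0"
  shows "l * erlang_integral n l = (LBINT s:{0..}. s * exp (- sqrt l * s) * (1 + s / sqrt l) powr (n - 1))"
proof -
  let ?g = "\<lambda>t. indicator {0..} t *\<^sub>R (t * exp (- l * t) * (1 + t) powr (n - 1)) :: real"
  let ?h = "\<lambda>x. indicator {0..} x *\<^sub>R (x * exp (- sqrt l * x) * (1 + x / sqrt l) powr (n - 1)) :: real"
  have sl: "sqrt l > 0" using assms by simp
  have "erlang_integral n l = integral\<^sup>L lborel ?g"
    by (simp add: erlang_integral_def set_lebesgue_integral_def)
  also have "\<dots> = \<bar>1 / sqrt l\<bar> *\<^sub>R integral\<^sup>L lborel (\<lambda>x. ?g (0 + 1 / sqrt l * x))"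
    using sl by (intro lborel_integral_real_affine) simp
  also have "(\<lambda>x. ?g (0 + 1 / sqrt l * x)) = (\<lambda>x. (1 / sqrt l) * ?h x)"
  proof
    fix x :: real
    have "indicator {0..} (x / sqrt l) = (indicator {0..} x :: real)"
      using sl by (simp add: indicator_def zero_le_divide_iff)
    moreover have "l * (x / sqrt l) = sqrt l * x"
      using assms sl by (simp add: field_simps real_sqrt_mult_self[symmetric] del: real_sqrt_mult_self)
         (metis real_sqrt_pow2 less_imp_le power2_eq_square)
    ultimately show "?g (0 + 1 / sqrt l * x) = (1 / sqrt l) * ?h x" by (simp add: mult_ac)
  qed
  also have "\<bar>1 / sqrt l\<bar> *\<^sub>R integral\<^sup>L lborel (\<lambda>x. (1 / sqrt l) * ?h x) = (1 / l) * integral\<^sup>L lborel ?h"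
    using assms sl by (simp add: abs_of_pos)
  finally show ?thesis using assms by (simp add: set_lebesgue_integral_def)
qed

lemma erlang_integral_halfin_whitt: fixes b :: real assumes b: "b \<ge> 0"
  shows "((\<lambda>l. l * erlang_integral (l + b * sqrt l) l) \<longlongrightarrow> hw_denom b) at_top"
proof -
  let ?s = "\<lambda>l x. indicator {0..} x *\<^sub>R (x * exp (- sqrt l * x) * (1 + x / sqrt l) powr (l + b * sqrt l - 1)) :: real"
  let ?f = "\<lambda>x. indicator {0..} x *\<^sub>R (x * exp (b * x - x\<^sup>2 / 2)) :: real"
  let ?w = "\<lambda>x. indicator {0..} x *\<^sub>R (exp (2 * (b + 2)\<^sup>2) * exp (- x) + x * exp (- x)) :: real"
  have "((\<lambda>l. integral\<^sup>L lborel (?s l)) \<longlongrightarrow> integral\<^sup>L lborel ?f) at_top"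
  proof (rule integral_dominated_convergence_at_top[where w = ?w])
    show "?f \<in> borel_measurable lborel" by measurable
    show "?s l \<in> borel_measurable lborel" for l by measurable
    have "integrable lborel (\<lambda>x. exp (2 * (b + 2)\<^sup>2) * (indicator {0..} x * (x ^ 0 * exp (- 1 * x)))
        + indicator {0..} x * (x ^ 1 * exp (- 1 * x)) :: real)"
      using integrable_exp_moment[of 1 0] integrable_exp_moment[of 1 1]
      by (intro Bochner_Integration.integrable_add) auto
    thus "integrable lborel ?w"
      by (rule Bochner_Integration.integrable_cong[THEN iffD1, rotated -1]) (auto simp: indicator_def)
    show "AE x in lborel. ((\<lambda>l. ?s l x) \<longlongrightarrow> ?f x) at_top"
    proof (rule AE_I2)
      show "((\<lambda>l. ?s l x) \<longlongrightarrow> ?f x) at_top" for x :: real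
        using hw_integrand_tendsto[of x b] by (cases "x \<ge> 0") simp_all
    qed
    show "\<forall>\<^sub>F l in at_top. AE x in lborel. norm (?s l x) \<le> ?w x"
      using eventually_ge_at_top[of "max 2 (64 * (b + 1)\<^sup>2)"]
    proof eventually_elim
      case (elim l)
      have "(8 * (b + 1))\<^sup>2 = 64 * (b + 1)\<^sup>2" by (simp only: power_mult_distrib) simp
      hence "(8 * (b + 1))\<^sup>2 \<le> l" using elim by simp
      hence lb: "sqrt l \<ge> 8 * (b + 1)" using b by (simp add: real_le_rsqrt)
      have l2: "l \<ge> 2" using elim by simp
      show ?case
      proof (rule AE_I2)
        fix x :: real
        show "norm (?s l x) \<le> ?w x"
        proof (cases "x \<ge> 0")
          case True
          thus ?thesis using hw_integrand_bound[OF b l2 lb True] by simp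
        qed simp
      qed
    qed
  qed
  hence "((\<lambda>l. LBINT s:{0..}. s * exp (- sqrt l * s) * (1 + s / sqrt l) powr (l + b * sqrt l - 1))
      \<longlongrightarrow> hw_denom b) at_top"
    by (simp add: hw_denom_def set_lebesgue_integral_def)
  thus ?thesis
    by (rule tendsto_cong[THEN iffD1, rotated])
       (use eventually_gt_at_top[of 0] in \<open>eventually_elim, simp add: erlang_integral_rescale\<close>)
qed

lemma erlangC_halfin_whitt: fixes b :: real assumes b: "b \<ge> 0"
  shows "((\<lambda>l. erlangC (l + b * sqrt l) l) \<longlongrightarrow> inverse (hw_denom b)) at_top"
proof -
  have "((\<lambda>l. min 1 (inverse (l * erlang_integral (l + b * sqrt l) l)))
          \<longlongrightarrow> min 1 (inverse (hw_denom b))) at_top"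
    using hw_denom_ge_1[OF b]
    by (intro tendsto_min tendsto_const tendsto_inverse erlang_integral_halfin_whitt b) auto
  thus ?thesis using hw_denom_ge_1[OF b] by (simp add: erlangC_eq_integral inverse_le_1_iff)
qed

definition UB_arg :: "real \<Rightarrow> real \<Rightarrow> real" where
  "UB_arg b l = sqrt (- 2 * (l + b * sqrt l) * (1 - l / (l + b * sqrt l) + ln (l / (l + b * sqrt l))))"

definition UB_denom :: "real \<Rightarrow> real \<Rightarrow> real" where
  "UB_denom b l = l / (l + b * sqrt l) + ((l + b * sqrt l) - l) / sqrt (l + b * sqrt l) *
     (Phi_ratio (UB_arg b l) + 2 / (3 * sqrt (l + b * sqrt l)))"

lemma UB_eq_inverse_UB_denom: "UB b l = inverse (UB_denom b l)"
  by (simp only: UB_def Let_def UB_denom_def UB_arg_def Phi_div_phi)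

lemma UB_arg_tendsto: fixes b :: real assumes "b \<ge> 0" shows "((\<lambda>l. UB_arg b l) \<longlongrightarrow> b) at_top"
proof -
  have "((\<lambda>l. - 2 * (l + b * sqrt l) * (1 - l / (l + b * sqrt l) + ln (l / (l + b * sqrt l))))
          \<longlongrightarrow> b * b) at_top"
    by real_asymp
  hence "((\<lambda>l. UB_arg b l) \<longlongrightarrow> sqrt (b * b)) at_top" unfolding UB_arg_def by (rule tendsto_real_sqrt)
  thus ?thesis using assms by simp
qed

lemma UB_denom_pos: assumes l: "l > 0" and b: "b \<ge> 0" shows "UB_denom b l > 0"
proof -
  have n: "l + b * sqrt l \<ge> l" using b l by simp
  have "((l + b * sqrt l) - l) / sqrt (l + b * sqrt l) \<ge> 0" using n l by (intro divide_nonneg_nonneg) auto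
  moreover have "Phi_ratio (UB_arg b l) + 2 / (3 * sqrt (l + b * sqrt l)) > 0"
    using Phi_ratio_pos[of "UB_arg b l"] n l by (simp add: add_pos_pos)
  moreover have "l / (l + b * sqrt l) > 0" using l n by simp
  ultimately show ?thesis unfolding UB_denom_def by (intro add_pos_nonneg mult_nonneg_nonneg) auto
qed

lemma continuous_on_UB: assumes l: "l > 0" shows "continuous_on {0..} (\<lambda>b. UB b l)"
proof (rule continuous_at_imp_continuous_on, rule ballI)
  fix b :: real assume "b \<in> {0..}"
  hence b: "b \<ge> 0" by simp
  have "l + b * sqrt l > 0" using b l by (simp add: add_pos_nonneg)
  hence "isCont (\<lambda>b. UB_denom b l) b"
    unfolding UB_denom_def UB_arg_def using l by (intro continuous_intros) auto
  thus "isCont (\<lambda>b. UB b l) b"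
    unfolding UB_eq_inverse_UB_denom using UB_denom_pos[OF l b] by (intro continuous_intros) auto
qed

lemma UB_arg_mono: assumes l: "l > 0" and b: "0 \<le> b" "b \<le> b'" shows "UB_arg b l \<le> UB_arg b' l"
proof -
  let ?q = "\<lambda>n. 2 * (n * ln n - n * ln l - n + l)"
  have eq: "- 2 * n * (1 - l / n + ln (l / n)) = ?q n" if "n > 0" for n :: real
    using that l by (simp add: ln_div field_simps)
  have "?q (l + b * sqrt l) \<le> ?q (l + b' * sqrt l)"
  proof (rule DERIV_nonneg_imp_nondecreasing[of _ _ ?q])
    show "l + b * sqrt l \<le> l + b' * sqrt l" using b l by (simp add: mult_right_mono)
    fix x assume x: "l + b * sqrt l \<le> x" "x \<le> l + b' * sqrt l"
    moreover have "l \<le> l + b * sqrt l" using b l by simp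
    ultimately have xp: "x > 0" "x \<ge> l" using l by linarith+
    have "DERIV ?q x :> 2 * (ln x - ln l)"
      using xp by (auto intro!: derivative_eq_intros simp: field_simps)
    moreover have "2 * (ln x - ln l) \<ge> 0" using xp l by simp
    ultimately show "\<exists>y. DERIV ?q x :> y \<and> y \<ge> 0" by blast
  qed
  moreover have "l + b * sqrt l > 0" "l + b' * sqrt l > 0" using l b by (simp_all add: add_pos_nonneg)
  ultimately show ?thesis
    unfolding UB_arg_def by (intro real_sqrt_le_mono) (simp only: eq)
qed

text \<open>For \<open>b \<in> [0, B]\<close> the bound \<open>UB\<close> is bounded below uniformly by a quantity
  that tends to \<open>1 / hw_denom B\<close>; this replaces monotonicity of \<open>UB\<close> in \<open>b\<close>.\<close>
lemma UB_lower_bound: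
  assumes l: "l \<ge> 1" and b: "0 \<le> b" "b \<le> B"
  shows "inverse (1 + B * (Phi_ratio (UB_arg B l) + 2 / (3 * sqrt l))) \<le> UB b l"
proof -
  have l0: "l > 0" using l by simp
  let ?n = "l + b * sqrt l"
  have n: "?n \<ge> l" and sn: "sqrt l \<le> sqrt ?n" using b l0 by simp_all
  have g: "(?n - l) / sqrt ?n \<le> b"
  proof -
    have "b * sqrt l \<le> b * sqrt ?n" using b sn by (simp add: mult_left_mono)
    moreover have "sqrt ?n > 0" using n l0 by simp
    ultimately show ?thesis by (simp add: divide_le_eq)
  qed
  have g0: "(?n - l) / sqrt ?n \<ge> 0" using n l0 by (intro divide_nonneg_nonneg) auto
  have h: "Phi_ratio (UB_arg b l) + 2 / (3 * sqrt ?n) \<le> Phi_ratio (UB_arg B l) + 2 / (3 * sqrt l)"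
  proof (rule add_mono)
    show "Phi_ratio (UB_arg b l) \<le> Phi_ratio (UB_arg B l)" using UB_arg_mono[OF l0 b] by (rule Phi_ratio_mono)
    show "2 / (3 * sqrt ?n) \<le> 2 / (3 * sqrt l)" using sn l0 by (simp add: frac_le)
  qed
  have h0: "Phi_ratio (UB_arg b l) + 2 / (3 * sqrt ?n) \<ge> 0"
    using Phi_ratio_pos[of "UB_arg b l"] n l0 by (simp add: add_nonneg_nonneg less_imp_le)
  have "(?n - l) / sqrt ?n * (Phi_ratio (UB_arg b l) + 2 / (3 * sqrt ?n))
      \<le> B * (Phi_ratio (UB_arg B l) + 2 / (3 * sqrt l))"
    using g g0 h h0 b by (intro mult_mono) auto
  moreover have "l / ?n \<le> 1" using n l0 by simp
  ultimately have "UB_denom b l \<le> 1 + B * (Phi_ratio (UB_arg B l) + 2 / (3 * sqrt l))"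
    unfolding UB_denom_def by simp
  thus ?thesis unfolding UB_eq_inverse_UB_denom using UB_denom_pos[OF l0 b(1)]
    by (intro le_imp_inverse_le) auto
qed

lemma UB_lower_bound_tendsto: assumes B: "B \<ge> 0"
  shows "((\<lambda>l. inverse (1 + B * (Phi_ratio (UB_arg B l) + 2 / (3 * sqrt l)))) \<longlongrightarrow> inverse (hw_denom B)) at_top"
proof -
  have "((\<lambda>l::real. 2 / (3 * sqrt l)) \<longlongrightarrow> 0) at_top" by real_asymp
  moreover have "((\<lambda>l. Phi_ratio (UB_arg B l)) \<longlongrightarrow> Phi_ratio B) at_top"
    by (rule isCont_tendsto_compose[OF isCont_Phi_ratio UB_arg_tendsto[OF B]])
  ultimately have "((\<lambda>l. inverse (1 + B * (Phi_ratio (UB_arg B l) + 2 / (3 * sqrt l))))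
      \<longlongrightarrow> inverse (1 + B * (Phi_ratio B + 0))) at_top"
    using hw_denom_ge_1[OF B] by (intro tendsto_inverse tendsto_add tendsto_mult tendsto_const) (auto simp: hw_denom_eq)
  thus ?thesis by (simp add: hw_denom_eq)
qed

lemma UB_halfin_whitt: fixes b :: real assumes b: "b \<ge> 0"
  shows "((\<lambda>l. UB b l) \<longlongrightarrow> inverse (hw_denom b)) at_top"
proof -
  have "((\<lambda>l. l / (l + b * sqrt l)) \<longlongrightarrow> 1) at_top" by real_asymp
  moreover have "((\<lambda>l. ((l + b * sqrt l) - l) / sqrt (l + b * sqrt l)) \<longlongrightarrow> b) at_top" by real_asymp
  moreover have "((\<lambda>l. 2 / (3 * sqrt (l + b * sqrt l))) \<longlongrightarrow> 0) at_top" by real_asymp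
  moreover have "((\<lambda>l. Phi_ratio (UB_arg b l)) \<longlongrightarrow> Phi_ratio b) at_top"
    by (rule isCont_tendsto_compose[OF isCont_Phi_ratio UB_arg_tendsto[OF b]])
  ultimately have "((\<lambda>l. UB_denom b l) \<longlongrightarrow> 1 + b * (Phi_ratio b + 0)) at_top"
    unfolding UB_denom_def by (intro tendsto_add tendsto_mult)
  thus ?thesis
    unfolding UB_eq_inverse_UB_denom using hw_denom_ge_1[OF b]
    by (intro tendsto_inverse) (auto simp: hw_denom_eq)
qed

section \<open>Scaled scenarios\<close>

lemma filterlim_real_mult_sequentially:
  fixes c :: real assumes "c > 0" shows "filterlim (\<lambda>m::nat. real m * c) at_top sequentially"
  using filterlim_tendsto_pos_mult_at_top[OF tendsto_const assms filterlim_real_sequentially]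
  by (simp add: mult.commute)

lemma eventually_sqrt_le_linear:
  fixes c d B :: real assumes c: "c > 0" and d: "d \<ge> 0" and B: "B \<ge> 0"
  shows "eventually (\<lambda>m::nat. B * sqrt (real m * d) \<le> real m * c) sequentially"
proof -
  have "eventually (\<lambda>m::nat. real m \<ge> (B * sqrt d / c)\<^sup>2) sequentially"
    using filterlim_real_sequentially unfolding filterlim_at_top by blast
  thus ?thesis
  proof eventually_elim
    case (elim m)
    have "B * sqrt d / c \<le> sqrt (real m)"
      using real_sqrt_le_mono[OF elim] B d c by simp
    hence "B * sqrt d \<le> c * sqrt (real m)" using c by (simp add: divide_le_eq mult.commute)
    hence "B * sqrt d * sqrt (real m) \<le> c * sqrt (real m) * sqrt (real m)" by (simp add: mult_right_mono)
    thus ?case by (simp add: real_sqrt_mult mult_ac)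
  qed
qed

lemma erlangC_scaled_tendsto:
  fixes c b :: real assumes "c > 0" "b \<ge> 0"
  shows "(\<lambda>m::nat. erlangC (real m * c + b * sqrt (real m * c)) (real m * c)) \<longlonglongrightarrow> inverse (hw_denom b)"
  using filterlim_compose[OF erlangC_halfin_whitt[OF assms(2)] filterlim_real_mult_sequentially[OF assms(1)]]
  by simp

lemma erlangC_scaled_understaffed:
  fixes a c b :: real assumes "0 < a" "a < c" "b \<ge> 0"
  shows "eventually (\<lambda>m::nat. erlangC (real m * a + b * sqrt (real m * a)) (real m * c) = 1) sequentially"
proof -
  have "eventually (\<lambda>m::nat. b * sqrt (real m * a) \<le> real m * (c - a)) sequentially"
    using assms by (intro eventually_sqrt_le_linear) auto
  thus ?thesis using eventually_gt_at_top[of "0::nat"]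
    by eventually_elim (use assms in \<open>intro erlangC_eq_1, simp_all add: algebra_simps\<close>)
qed

text \<open>The excess capacity is of order \<open>m\<close>, which beats every square-root safety margin
  \<open>B * sqrt (m * c)\<close>.\<close>
lemma erlangC_scaled_overstaffed:
  fixes a c b :: real assumes c: "0 < c" "c < a" and b: "b \<ge> 0"
  shows "(\<lambda>m::nat. erlangC (real m * a + b * sqrt (real m * a)) (real m * c)) \<longlonglongrightarrow> 0"
proof (rule order_tendstoI)
  fix y :: real assume "y < 0"
  show "eventually (\<lambda>m. y < erlangC (real m * a + b * sqrt (real m * a)) (real m * c)) sequentially"
    using eventually_gt_at_top[of "0::nat"]
    by eventually_elim (use c \<open>y < 0\<close> erlangC_nonneg in \<open>force intro: less_le_trans\<close>)
next
  fix y :: real assume y: "y > 0"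
  have "0 < min y (1 / 2)" "min y (1 / 2) < 1" using y by auto
  then obtain B where "B > 0" and "\<And>b'. B < b' \<Longrightarrow> inverse (hw_denom b') < min y (1 / 2)"
    by (rule hw_inverse_crossing) blast
  hence B: "inverse (hw_denom (B + 1)) < y" by force
  have "eventually (\<lambda>m. erlangC (real m * c + (B + 1) * sqrt (real m * c)) (real m * c) < y) sequentially"
    using erlangC_scaled_tendsto[of c "B + 1"] c \<open>B > 0\<close> B by (intro order_tendstoD) auto
  moreover have "eventually (\<lambda>m::nat. (B + 1) * sqrt (real m * c) \<le> real m * (a - c)) sequentially"
    using c \<open>B > 0\<close> by (intro eventually_sqrt_le_linear) auto
  ultimately show "eventually (\<lambda>m. erlangC (real m * a + b * sqrt (real m * a)) (real m * c) < y) sequentially"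
    using eventually_gt_at_top[of "0::nat"]
  proof eventually_elim
    case (elim m)
    have "real m * c + (B + 1) * sqrt (real m * c) \<le> real m * a + b * sqrt (real m * a)"
      using elim(2) b c by (simp add: algebra_simps add_increasing2)
    hence "erlangC (real m * a + b * sqrt (real m * a)) (real m * c)
        \<le> erlangC (real m * c + (B + 1) * sqrt (real m * c)) (real m * c)"
      using elim c by (intro erlangC_antimono) auto
    thus ?case using elim(1) by simp
  qed
qed

section \<open>The staffing problems \<open>F\<^sub>m\<close> and \<open>G\<^sub>m\<close>\<close>

lemma Lam_pos: "m > 0 \<Longrightarrow> \<Lambda>0 k > 0 \<Longrightarrow> Lam \<Lambda>0 m k > 0"
  by (simp add: Lam_def)

lemma staff_eq: "staff \<Lambda>0 m b k = real m * \<Lambda>0 k + b * sqrt (real m * \<Lambda>0 k)"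
  by (simp add: staff_def Lam_def)

lemma staff_mono: "\<Lambda>0 k \<ge> 0 \<Longrightarrow> b \<le> b' \<Longrightarrow> staff \<Lambda>0 m b k \<le> staff \<Lambda>0 m b' k"
  by (simp add: staff_eq mult_right_mono)

lemma staff_nonneg: "\<Lambda>0 k \<ge> 0 \<Longrightarrow> b \<ge> 0 \<Longrightarrow> staff \<Lambda>0 m b k \<ge> 0"
  by (simp add: staff_eq)

lemma cost_mono:
  assumes "strict_mono_on {0..} cbar" "0 \<le> staff \<Lambda>0 m b k" "staff \<Lambda>0 m b k \<le> staff \<Lambda>0 m' b' k'"
  shows "cost cbar \<Lambda>0 m b k \<le> cost cbar \<Lambda>0 m' b' k'"
  unfolding cost_def using assms by (intro strict_mono_on_leD[OF assms(1)]) auto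

definition mean_wait_prob :: "nat \<Rightarrow> (nat \<Rightarrow> real) \<Rightarrow> (nat \<Rightarrow> real) \<Rightarrow> nat \<Rightarrow> real \<Rightarrow> nat \<Rightarrow> real" where
  "mean_wait_prob K p \<Lambda>0 m b k = (\<Sum>j=1..K. p j * erlangC (staff \<Lambda>0 m b k) (Lam \<Lambda>0 m j))"

lemma feasF_iff: "feasF K p \<Lambda>0 \<epsilon> m b k \<longleftrightarrow> b \<ge> 0 \<and> k \<in> {1..K} \<and> mean_wait_prob K p \<Lambda>0 m b k \<le> \<epsilon>"
  by (simp add: feasF_def mean_wait_prob_def)

locale scenario_model =
  fixes K :: nat and p \<Lambda>0 :: "nat \<Rightarrow> real"
  assumes p_pos: "\<And>k. k \<in> {1..K} \<Longrightarrow> p k > 0"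
    and \<Lambda>0_pos: "\<And>k. k \<in> {1..K} \<Longrightarrow> \<Lambda>0 k > 0"
    and \<Lambda>0_mono: "\<And>k l. k \<in> {1..K} \<Longrightarrow> l \<in> {1..K} \<Longrightarrow> k < l \<Longrightarrow> \<Lambda>0 k < \<Lambda>0 l"
begin

text \<open>Scenarios below the key one are overstaffed, those above it understaffed (in the limit).\<close>
lemma mean_wait_prob_tendsto:
  assumes i: "i \<in> {1..K}" and b: "b \<ge> 0"
  shows "(\<lambda>m. mean_wait_prob K p \<Lambda>0 m b i) \<longlonglongrightarrow> p i * inverse (hw_denom b) + (\<Sum>j=i+1..K. p j)"
proof -
  define v where "v j = (if j < i then 0 else if j = i then inverse (hw_denom b) else 1)" for j
  have "(\<lambda>m. erlangC (staff \<Lambda>0 m b i) (Lam \<Lambda>0 m j)) \<longlonglongrightarrow> v j" if j: "j \<in> {1..K}" for j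
  proof -
    consider "j < i" | "j = i" | "i < j" by linarith
    thus ?thesis
    proof cases
      case 1
      thus ?thesis using erlangC_scaled_overstaffed[of "\<Lambda>0 j" "\<Lambda>0 i" b] \<Lambda>0_pos[OF j] \<Lambda>0_mono[OF j i] b
        by (simp add: v_def staff_eq Lam_def)
    next
      case 2
      thus ?thesis using erlangC_scaled_tendsto[OF \<Lambda>0_pos[OF i] b] by (simp add: v_def staff_eq Lam_def)
    next
      case 3
      have "eventually (\<lambda>m::nat. erlangC (real m * \<Lambda>0 i + b * sqrt (real m * \<Lambda>0 i)) (real m * \<Lambda>0 j) = 1)
          sequentially"
        using \<Lambda>0_pos[OF i] \<Lambda>0_mono[OF i j 3] b by (intro erlangC_scaled_understaffed) auto
      thus ?thesis using 3 by (simp add: v_def staff_eq Lam_def tendsto_eventually)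
    qed
  qed
  hence "(\<lambda>m. mean_wait_prob K p \<Lambda>0 m b i) \<longlonglongrightarrow> (\<Sum>j=1..K. p j * v j)"
    unfolding mean_wait_prob_def by (intro tendsto_sum tendsto_mult tendsto_const)
  moreover have "(\<Sum>j=1..K. p j * v j) = p i * inverse (hw_denom b) + (\<Sum>j=i+1..K. p j)"
  proof -
    have "{1..K} = {1..<i} \<union> {i..K}" using i by auto
    hence "(\<Sum>j=1..K. p j * v j) = (\<Sum>j\<in>{1..<i}. p j * v j) + (\<Sum>j=i..K. p j * v j)"
      by (simp add: sum.union_disjoint ivl_disj_int)
    also have "(\<Sum>j=i..K. p j * v j) = p i * v i + (\<Sum>j=i+1..K. p j * v j)"
      using i by (simp add: sum.atLeast_Suc_atMost)
    finally show ?thesis by (simp add: v_def)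
  qed
  ultimately show ?thesis by simp
qed

lemma mean_wait_prob_ge_tail:
  assumes i: "i \<in> {1..K}" and m: "m > 0" and n: "staff \<Lambda>0 m b k \<le> Lam \<Lambda>0 m i"
  shows "(\<Sum>j=i..K. p j) \<le> mean_wait_prob K p \<Lambda>0 m b k"
proof -
  have "{1..K} = {1..<i} \<union> {i..K}" using i by auto
  hence "mean_wait_prob K p \<Lambda>0 m b k
      = (\<Sum>j\<in>{1..<i}. p j * erlangC (staff \<Lambda>0 m b k) (Lam \<Lambda>0 m j))
        + (\<Sum>j=i..K. p j * erlangC (staff \<Lambda>0 m b k) (Lam \<Lambda>0 m j))"
    unfolding mean_wait_prob_def by (simp add: sum.union_disjoint ivl_disj_int)
  moreover have "(\<Sum>j\<in>{1..<i}. p j * erlangC (staff \<Lambda>0 m b k) (Lam \<Lambda>0 m j)) \<ge> 0"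
    using i p_pos \<Lambda>0_pos m by (intro sum_nonneg mult_nonneg_nonneg erlangC_nonneg Lam_pos less_imp_le) auto
  moreover have "erlangC (staff \<Lambda>0 m b k) (Lam \<Lambda>0 m j) = 1" if j: "j \<in> {i..K}" for j
  proof (rule erlangC_eq_1)
    have "\<Lambda>0 i \<le> \<Lambda>0 j" using \<Lambda>0_mono[of i j] i j by (cases "i = j") auto
    hence "Lam \<Lambda>0 m i \<le> Lam \<Lambda>0 m j" by (simp add: Lam_def mult_left_mono)
    thus "staff \<Lambda>0 m b k \<le> Lam \<Lambda>0 m j" using n by linarith
    show "Lam \<Lambda>0 m j > 0" using i j m \<Lambda>0_pos by (intro Lam_pos) auto
  qed
  ultimately show ?thesis by simp
qed

lemma mean_wait_prob_antimono:
  assumes k: "k \<in> {1..K}" and m: "m > 0" and "b \<le> b'"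
  shows "mean_wait_prob K p \<Lambda>0 m b' k \<le> mean_wait_prob K p \<Lambda>0 m b k"
  unfolding mean_wait_prob_def
  using assms p_pos \<Lambda>0_pos staff_mono[of \<Lambda>0 k b b' m]
  by (intro sum_mono mult_left_mono erlangC_antimono Lam_pos) (auto simp: less_imp_le)

lemma isCont_mean_wait_prob:
  assumes "m > 0" shows "isCont (\<lambda>b. mean_wait_prob K p \<Lambda>0 m b k) b"
  unfolding mean_wait_prob_def staff_eq
  using assms \<Lambda>0_pos by (intro continuous_intros isCont_o2[OF _ isCont_erlangC] Lam_pos) auto

text \<open>When the scenarios \<open>i, \<dots>, K\<close> carry probability more than \<open>\<epsilon>\<close>, a feasible staffing
  exceeds the arrival rate of scenario \<open>i\<close>, so it is also reached with key scenario \<open>i\<close>.\<close>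
lemma feasF_rekey:
  assumes i: "i \<in> {1..K}" and m: "m > 0" and tail: "(\<Sum>j=i..K. p j) > \<epsilon>"
    and feas: "feasF K p \<Lambda>0 \<epsilon> m b k"
  obtains b' where "feasF K p \<Lambda>0 \<epsilon> m b' i" and "staff \<Lambda>0 m b' i = staff \<Lambda>0 m b k"
proof -
  have "\<not> staff \<Lambda>0 m b k \<le> Lam \<Lambda>0 m i"
  proof
    assume "staff \<Lambda>0 m b k \<le> Lam \<Lambda>0 m i"
    from mean_wait_prob_ge_tail[OF i m this] feas tail show False by (simp add: feasF_iff)
  qed
  moreover have "Lam \<Lambda>0 m i > 0" using m \<Lambda>0_pos[OF i] by (rule Lam_pos)
  moreover define b' where "b' = (staff \<Lambda>0 m b k - Lam \<Lambda>0 m i) / sqrt (Lam \<Lambda>0 m i)"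
  ultimately have "b' \<ge> 0" and st: "staff \<Lambda>0 m b' i = staff \<Lambda>0 m b k"
    by (simp_all add: b'_def staff_def)
  hence "feasF K p \<Lambda>0 \<epsilon> m b' i"
    using feas i unfolding feasF_def by (simp add: staff_def)
  with st show thesis by (intro that)
qed

lemma optF_Inf:
  assumes i: "i \<in> {1..K}" and m: "m > 0" and tail: "(\<Sum>j=i..K. p j) > \<epsilon>"
    and c: "strict_mono_on {0..} cbar" and feas: "feasF K p \<Lambda>0 \<epsilon> m b i"
  shows "optF K p \<Lambda>0 cbar \<epsilon> m (Inf {b. feasF K p \<Lambda>0 \<epsilon> m b i}) i"
proof -
  define S where "S = {b. feasF K p \<Lambda>0 \<epsilon> m b i}"
  have bdd: "bdd_below S" by (rule bdd_belowI[of _ 0]) (simp add: S_def feasF_iff)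
  have "S = {0..} \<inter> (\<lambda>b. mean_wait_prob K p \<Lambda>0 m b i) -` {..\<epsilon>}"
    using i by (auto simp: S_def feasF_iff)
  hence "closed S"
    using m by (auto intro!: continuous_closed_preimage continuous_at_imp_continuous_on isCont_mean_wait_prob)
  hence mem: "Inf S \<in> S" using feas bdd by (intro closed_contains_Inf) (auto simp: S_def)
  have "cost cbar \<Lambda>0 m (Inf S) i \<le> cost cbar \<Lambda>0 m b' k'" if f: "feasF K p \<Lambda>0 \<epsilon> m b' k'" for b' k'
  proof -
    obtain b'' where "b'' \<in> S" and st: "staff \<Lambda>0 m b'' i = staff \<Lambda>0 m b' k'"
      using feasF_rekey[OF i m tail f] by (auto simp: S_def)
    hence "staff \<Lambda>0 m (Inf S) i \<le> staff \<Lambda>0 m b' k'"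
      using cInf_lower[OF _ bdd] \<Lambda>0_pos[OF i] staff_mono by (metis less_imp_le)
    moreover have "0 \<le> staff \<Lambda>0 m (Inf S) i"
      using mem \<Lambda>0_pos[OF i] by (intro staff_nonneg) (auto simp: S_def feasF_iff)
    ultimately show ?thesis using c by (intro cost_mono)
  qed
  thus ?thesis using mem unfolding optF_def S_def by blast
qed

lemma eventually_feasF:
  assumes "i \<in> {1..K}" "b \<ge> 0" and "p i * inverse (hw_denom b) + (\<Sum>j=i+1..K. p j) < \<epsilon>"
  shows "eventually (\<lambda>m. feasF K p \<Lambda>0 \<epsilon> m b i) sequentially"
  using order_tendstoD(2)[OF mean_wait_prob_tendsto assms(3)] assms(1,2)
  by (auto simp: feasF_iff elim: eventually_mono)

lemma eventually_feasF_above: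
  assumes i: "i \<in> {1..K}" and B: "B \<ge> 0" and "\<epsilon> < p i * inverse (hw_denom B) + (\<Sum>j=i+1..K. p j)"
  shows "eventually (\<lambda>m. \<forall>b. feasF K p \<Lambda>0 \<epsilon> m b i \<longrightarrow> B < b) sequentially"
  using order_tendstoD(1)[OF mean_wait_prob_tendsto[OF i B] assms(3)] eventually_gt_at_top[of 0]
proof eventually_elim
  case (elim m)
  show ?case
  proof (intro allI impI)
    fix b assume "feasF K p \<Lambda>0 \<epsilon> m b i"
    hence "b \<le> B \<Longrightarrow> mean_wait_prob K p \<Lambda>0 m B i \<le> \<epsilon>"
      using mean_wait_prob_antimono[OF i elim(2)] by (force simp: feasF_iff)
    thus "B < b" using elim(1) by fastforce
  qed
qed

end

lemma feasG_iff: "feasG K p \<Lambda>0 \<epsilon> i m b \<longleftrightarrow> b \<ge> 0 \<and> p i * UB b (Lam \<Lambda>0 m i) \<le> \<epsilon> - (\<Sum>k=i+1..K. p k)"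
  by (simp add: feasG_def)

lemma optG_Inf:
  assumes i: "\<Lambda>0 i > 0" and m: "m > 0"
    and c: "strict_mono_on {0..} cbar" and feas: "feasG K p \<Lambda>0 \<epsilon> i m b"
  shows "optG K p \<Lambda>0 cbar \<epsilon> i m (Inf {b. feasG K p \<Lambda>0 \<epsilon> i m b})"
proof -
  define S where "S = {b. feasG K p \<Lambda>0 \<epsilon> i m b}"
  have bdd: "bdd_below S" by (rule bdd_belowI[of _ 0]) (simp add: S_def feasG_iff)
  have "S = {0..} \<inter> (\<lambda>b. p i * UB b (Lam \<Lambda>0 m i)) -` {..\<epsilon> - (\<Sum>k=i+1..K. p k)}"
    by (auto simp: S_def feasG_iff)
  moreover have "continuous_on {0..} (\<lambda>b. p i * UB b (Lam \<Lambda>0 m i))"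
    using m i by (intro continuous_intros continuous_on_UB Lam_pos)
  ultimately have "closed S" by (simp add: continuous_closed_preimage)
  hence mem: "Inf S \<in> S" using feas bdd by (intro closed_contains_Inf) (auto simp: S_def)
  have "cost cbar \<Lambda>0 m (Inf S) i \<le> cost cbar \<Lambda>0 m b' i" if "feasG K p \<Lambda>0 \<epsilon> i m b'" for b'
  proof (rule cost_mono[OF c])
    show "0 \<le> staff \<Lambda>0 m (Inf S) i" using mem i by (intro staff_nonneg) (auto simp: S_def feasG_iff)
    show "staff \<Lambda>0 m (Inf S) i \<le> staff \<Lambda>0 m b' i"
      using that i by (intro staff_mono cInf_lower[OF _ bdd]) (auto simp: S_def)
  qed
  thus ?thesis using mem unfolding optG_def S_def by blast
qed

lemma UB_scaled_tendsto:
  assumes "\<Lambda>0 i > 0" "b \<ge> 0"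
  shows "(\<lambda>m. UB b (Lam \<Lambda>0 m i)) \<longlonglongrightarrow> inverse (hw_denom b)"
  using filterlim_compose[OF UB_halfin_whitt[OF assms(2)] filterlim_real_mult_sequentially[OF assms(1)]]
  by (simp add: Lam_def)

lemma eventually_feasG:
  assumes "\<Lambda>0 i > 0" "b \<ge> 0" and "p i * inverse (hw_denom b) < \<epsilon> - (\<Sum>k=i+1..K. p k)"
  shows "eventually (\<lambda>m. feasG K p \<Lambda>0 \<epsilon> i m b) sequentially"
  using order_tendstoD(2)[OF tendsto_mult[OF tendsto_const UB_scaled_tendsto[of \<Lambda>0 i b, OF assms(1,2)]] assms(3)] assms(2)
  by (auto simp: feasG_iff elim: eventually_mono)

lemma eventually_feasG_above:
  assumes i: "\<Lambda>0 i > 0" "p i > 0" and B: "B \<ge> 0"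
    and lt: "\<epsilon> - (\<Sum>k=i+1..K. p k) < p i * inverse (hw_denom B)"
  shows "eventually (\<lambda>m. \<forall>b. feasG K p \<Lambda>0 \<epsilon> i m b \<longrightarrow> B < b) sequentially"
proof -
  let ?low = "\<lambda>l. inverse (1 + B * (Phi_ratio (UB_arg B l) + 2 / (3 * sqrt l)))"
  have "(\<lambda>m. p i * ?low (Lam \<Lambda>0 m i)) \<longlonglongrightarrow> p i * inverse (hw_denom B)"
    using filterlim_compose[OF UB_lower_bound_tendsto[OF B] filterlim_real_mult_sequentially[OF i(1)]]
    by (intro tendsto_mult tendsto_const) (simp add: Lam_def)
  moreover have "filterlim (\<lambda>m. Lam \<Lambda>0 m i) at_top sequentially"
    using filterlim_real_mult_sequentially[OF i(1)] by (simp add: Lam_def[abs_def])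
  ultimately have "eventually (\<lambda>m. \<epsilon> - (\<Sum>k=i+1..K. p k) < p i * ?low (Lam \<Lambda>0 m i)
      \<and> Lam \<Lambda>0 m i \<ge> 1) sequentially"
    using lt by (intro eventually_conj order_tendstoD(1)) (auto simp: filterlim_at_top)
  thus ?thesis
  proof eventually_elim
    case (elim m)
    have "\<epsilon> - (\<Sum>k=i+1..K. p k) < p i * UB b (Lam \<Lambda>0 m i)" if "0 \<le> b" "b \<le> B" for b
      using elim mult_left_mono[OF UB_lower_bound[OF _ that] less_imp_le[OF i(2)]] by force
    thus ?case by (force simp: feasG_iff)
  qed
qed

lemma tendsto_Inf_of_eventually_bounds:
  fixes S :: "'a \<Rightarrow> real set"
  assumes s: "s > 0" and nonneg: "\<And>x b. b \<in> S x \<Longrightarrow> 0 \<le> b"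
    and above: "\<And>b. s < b \<Longrightarrow> eventually (\<lambda>x. b \<in> S x) F"
    and below: "\<And>B. 0 \<le> B \<Longrightarrow> B < s \<Longrightarrow> eventually (\<lambda>x. \<forall>b\<in>S x. B < b) F"
  shows "((\<lambda>x. Inf (S x)) \<longlongrightarrow> s) F"
proof (rule order_tendstoI)
  have bdd: "bdd_below (S x)" for x using nonneg by (intro bdd_belowI)
  fix a assume "a > s"
  hence "eventually (\<lambda>x. (s + a) / 2 \<in> S x) F" by (intro above) simp
  thus "eventually (\<lambda>x. Inf (S x) < a) F"
    by eventually_elim (use \<open>a > s\<close> cInf_lower[OF _ bdd] in force)
next
  fix a assume "a < s"
  define B where "B = max 0 ((a + s) / 2)"
  have "0 \<le> B" "B < s" "a < B" using \<open>a < s\<close> s by (auto simp: B_def less_max_iff_disj)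
  hence "eventually (\<lambda>x. (\<forall>b\<in>S x. B < b) \<and> s + 1 \<in> S x) F"
    by (intro eventually_conj below above) auto
  thus "eventually (\<lambda>x. a < Inf (S x)) F"
  proof eventually_elim
    case (elim x)
    hence "B \<le> Inf (S x)" by (intro cInf_greatest) (auto intro: less_imp_le)
    thus ?case using \<open>a < B\<close> by simp
  qed
qed

context scenario_model
begin

lemma Inf_feasF_tendsto:
  assumes i: "i \<in> {1..K}" and "\<beta> > 0"
    and above: "\<And>b. \<beta> < b \<Longrightarrow> p i * inverse (hw_denom b) + (\<Sum>j=i+1..K. p j) < \<epsilon>"
    and below: "\<And>b. 0 \<le> b \<Longrightarrow> b < \<beta> \<Longrightarrow> \<epsilon> < p i * inverse (hw_denom b) + (\<Sum>j=i+1..K. p j)"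
  shows "(\<lambda>m. Inf {b. feasF K p \<Lambda>0 \<epsilon> m b i}) \<longlonglongrightarrow> \<beta>"
proof (rule tendsto_Inf_of_eventually_bounds[OF \<open>\<beta> > 0\<close>])
  show "0 \<le> b" if "b \<in> {b. feasF K p \<Lambda>0 \<epsilon> m b i}" for m b using that by (simp add: feasF_iff)
  show "eventually (\<lambda>m. b \<in> {b. feasF K p \<Lambda>0 \<epsilon> m b i}) sequentially" if "\<beta> < b" for b
    using eventually_feasF[OF i _ above[OF that]] that \<open>\<beta> > 0\<close> by simp
  show "eventually (\<lambda>m. \<forall>b\<in>{b. feasF K p \<Lambda>0 \<epsilon> m b i}. B < b) sequentially"
    if "0 \<le> B" "B < \<beta>" for B
    using eventually_feasF_above[OF i that(1) below[OF that]] by simp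
qed

end

lemma Inf_feasG_tendsto:
  assumes i: "\<Lambda>0 i > 0" "p i > 0" and "\<beta> > 0"
    and above: "\<And>b. \<beta> < b \<Longrightarrow> p i * inverse (hw_denom b) < \<epsilon> - (\<Sum>k=i+1..K. p k)"
    and below: "\<And>b. 0 \<le> b \<Longrightarrow> b < \<beta> \<Longrightarrow> \<epsilon> - (\<Sum>k=i+1..K. p k) < p i * inverse (hw_denom b)"
  shows "(\<lambda>m. Inf {b. feasG K p \<Lambda>0 \<epsilon> i m b}) \<longlonglongrightarrow> \<beta>"
proof (rule tendsto_Inf_of_eventually_bounds[OF \<open>\<beta> > 0\<close>])
  show "0 \<le> b" if "b \<in> {b. feasG K p \<Lambda>0 \<epsilon> i m b}" for m b using that by (simp add: feasG_iff)
  show "eventually (\<lambda>m. b \<in> {b. feasG K p \<Lambda>0 \<epsilon> i m b}) sequentially" if "\<beta> < b" for b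
    using eventually_feasG[of \<Lambda>0 i, OF i(1) _ above[OF that]] that \<open>\<beta> > 0\<close> by simp
  show "eventually (\<lambda>m. \<forall>b\<in>{b. feasG K p \<Lambda>0 \<epsilon> i m b}. B < b) sequentially"
    if "0 \<le> B" "B < \<beta>" for B
    using eventually_feasG_above[of \<Lambda>0 i, OF i that(1) below[OF that]] by simp
qed

theorem theorem7:
  fixes K :: nat and p \<Lambda>0 :: "nat \<Rightarrow> real" and cbar :: "real \<Rightarrow> real"
    and \<epsilon> :: real and i :: nat
  assumes p_pos: "\<And>k. k \<in> {1..K} \<Longrightarrow> p k > 0"
    and p_sum: "(\<Sum>k=1..K. p k) = 1"
    and L_pos: "\<Lambda>0 1 > 0"
    and L_mono: "\<And>k l. k \<in> {1..K} \<Longrightarrow> l \<in> {1..K} \<Longrightarrow> k < l \<Longrightarrow> \<Lambda>0 k < \<Lambda>0 l"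
    and c_cont: "continuous_on {0..} cbar"
    and c_mono: "strict_mono_on {0..} cbar"
    and eps: "0 < \<epsilon>" "\<epsilon> < 1"
    and i_range: "i \<in> {1..K}"
    and i_upper: "(\<Sum>k=i..K. p k) > \<epsilon>"
    and i_lower: "(\<Sum>k=i+1..K. p k) < \<epsilon>"
  shows "\<exists>mbar. (\<forall>m\<ge>mbar. i \<in> Wset K p \<Lambda>0 cbar \<epsilon> m) \<and>
           (\<exists>\<beta>G \<beta>F :: nat \<Rightarrow> real. \<exists>\<beta>star > 0.
              (\<forall>m\<ge>mbar. optG K p \<Lambda>0 cbar \<epsilon> i m (\<beta>G m)) \<and>
              (\<forall>m\<ge>mbar. optF K p \<Lambda>0 cbar \<epsilon> m (\<beta>F m) i) \<and>
              \<beta>G \<longlonglongrightarrow> \<beta>star \<and> \<beta>F \<longlonglongrightarrow> \<beta>star)"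
proof -
  have \<Lambda>0_pos: "\<Lambda>0 k > 0" if "k \<in> {1..K}" for k
    using L_pos L_mono[of 1 k] that by (cases "k = 1") auto
  interpret scenario_model K p \<Lambda>0 using p_pos \<Lambda>0_pos L_mono by unfold_locales
  define tail where "tail = (\<Sum>k=i+1..K. p k)"
  have pi: "p i > 0" and \<Lambda>i: "\<Lambda>0 i > 0" using p_pos \<Lambda>0_pos i_range by auto
  have "(\<Sum>k=i..K. p k) = p i + tail" using i_range by (simp add: tail_def sum.atLeast_Suc_atMost)
  hence "0 < (\<epsilon> - tail) / p i" "(\<epsilon> - tail) / p i < 1" using pi i_lower i_upper by (simp_all add: tail_def)
  then obtain \<beta>star where \<beta>star: "\<beta>star > 0"
    and above: "\<And>b. \<beta>star < b \<Longrightarrow> p i * inverse (hw_denom b) < \<epsilon> - tail"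
    and below: "\<And>b. 0 \<le> b \<Longrightarrow> b < \<beta>star \<Longrightarrow> \<epsilon> - tail < p i * inverse (hw_denom b)"
    by (rule hw_inverse_crossing) (use pi in \<open>auto simp: field_simps\<close>)
  define \<beta>F where "\<beta>F m = Inf {b. feasF K p \<Lambda>0 \<epsilon> m b i}" for m
  define \<beta>G where "\<beta>G m = Inf {b. feasG K p \<Lambda>0 \<epsilon> i m b}" for m
  have "eventually (\<lambda>m. m > 0 \<and> feasF K p \<Lambda>0 \<epsilon> m (\<beta>star + 1) i \<and> feasG K p \<Lambda>0 \<epsilon> i m (\<beta>star + 1))
      sequentially"
    using \<beta>star above[of "\<beta>star + 1"] \<Lambda>i i_range
    by (intro eventually_conj eventually_gt_at_top eventually_feasF eventually_feasG) (auto simp: tail_def)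
  then obtain mbar where mbar: "\<And>m. m \<ge> mbar \<Longrightarrow> m > 0 \<and> feasF K p \<Lambda>0 \<epsilon> m (\<beta>star + 1) i
      \<and> feasG K p \<Lambda>0 \<epsilon> i m (\<beta>star + 1)"
    unfolding eventually_sequentially by blast
  have optF: "optF K p \<Lambda>0 cbar \<epsilon> m (\<beta>F m) i" if "m \<ge> mbar" for m
    unfolding \<beta>F_def using mbar[OF that] i_range i_upper c_mono by (blast intro: optF_Inf)
  have optG: "optG K p \<Lambda>0 cbar \<epsilon> i m (\<beta>G m)" if "m \<ge> mbar" for m
    unfolding \<beta>G_def using mbar[OF that] \<Lambda>i c_mono by (blast intro: optG_Inf)
  have "\<beta>F \<longlonglongrightarrow> \<beta>star" "\<beta>G \<longlonglongrightarrow> \<beta>star" unfolding \<beta>F_def \<beta>G_def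
    using \<beta>star above below i_range \<Lambda>i pi
    by (intro Inf_feasF_tendsto Inf_feasG_tendsto; force simp: tail_def)+
  then show ?thesis using optF optG \<beta>star unfolding Wset_def by blast
qed

end
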